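(* Let $(S,V)$ be a marked surface with a topological triangulation $\mathcal{T}$. Define $L_f\colon \mathbb{R}_{>1}^{E(\mathcal{T})}\times\mathbb{R}_{>0}^V\to\mathbb{R}_{>0}^{E(\mathcal{T})}$ by $L_f(\mathbf{I},\mathbf{r})(e_{ij})=\sqrt{r_i^2+r_j^2+2I_{ij}r_ir_j}$, where $e_{ij}$ is an edge joining $v_i,v_j$ and $I_{ij}=\mathbf{I}(e_{ij})$, $r_i=\mathbf{r}(v_i)$. Let $\mathbb{R}^{E(\mathcal{T})}_\Delta=\{\mathbf{x}\in\mathbb{R}^{E(\mathcal{T})}: \text{for every face } f_{ijk},\ 0<x(e_{ij})<x(e_{jk})+x(e_{ki})\}$ and $Q_f(\mathcal{T})=L_f^{-1}(\mathbb{R}^{E(\mathcal{T})}_\Delta)$. Then the map $\tilde L_f\colon Q_f(\mathcal{T})\to\mathbb{R}^{E(\mathcal{T})}_\Delta\times\mathbb{R}^V_{>0}$, $(\mathbf{I},\mathbf{r})\mapsto(L_f(\mathbf{I},\mathbf{r}),\mathbf{r})$, is injective, and hence a real analytic homeomorphism from its domain onto its image.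
   Context: A marked surface $(S,V)$ is a closed oriented surface $S$ with a nonempty finite set $V=\{v_1,\dots,v_n\}$ such that $\chi(S\setminus V)<0$. A (topological) triangulation is a $\Delta$-complex decomposition of $S$ (cells may be glued to themselves) whose set of $0$-cells is $V$, considered up to isotopy fixing $V$; $E(\mathcal{T})$ and $F(\mathcal{T})$ denote its edges and faces. For a finite set $A$, $\mathbb{R}^A$ is the space of real functions on $A$. *)

theory Defs
  imports "HOL-Analysis.Analysis"
begin

text \<open>Combinatorial data of a triangulation: vertices are the elements of the finite
type 'v, edges of 'e, faces of 'f.  ends e = (i,j) are the endpoints of edge e
(possibly i = j, as Delta-complexes allow self-gluing); fedges f = (a,b,c)
are the three edges of face f, with a joining v_i v_j, b joining v_j v_k, c joining v_k v_i.\<close>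

definition joins :: "('e \<Rightarrow> 'v \<times> 'v) \<Rightarrow> 'e \<Rightarrow> 'v \<Rightarrow> 'v \<Rightarrow> bool" where
  "joins ends e i j \<longleftrightarrow> ends e = (i, j) \<or> ends e = (j, i)"

definition triangulation_data ::
  "('e::finite \<Rightarrow> 'v::finite \<times> 'v) \<Rightarrow> ('f::finite \<Rightarrow> 'e \<times> 'e \<times> 'e) \<Rightarrow> bool" where
  "triangulation_data ends fedges \<longleftrightarrow>
     \<comment> \<open>each face is a triangle with vertices v_i, v_j, v_k\<close>
     (\<forall>f. \<exists>i j k. joins ends (fst (fedges f)) i j \<and> joins ends (fst (snd (fedges f))) j k
                   \<and> joins ends (snd (snd (fedges f))) k i)
     \<comment> \<open>closed surface: every edge occurs exactly twice among the sides of faces\<close>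
   \<and> (\<forall>e. card {f. fst (fedges f) = e} + card {f. fst (snd (fedges f)) = e}
            + card {f. snd (snd (fedges f)) = e} = 2)
     \<comment> \<open>chi(S - V) = |V| - |E| + |F| - |V| < 0\<close>
   \<and> int CARD('f) - int CARD('e) < 0"

definition Lf :: "('e::finite \<Rightarrow> 'v::finite \<times> 'v) \<Rightarrow> real^'e \<Rightarrow> real^'v \<Rightarrow> real^'e" where
  "Lf ends I r = (\<chi> e. let (i, j) = ends e in
       sqrt ((r$i)\<^sup>2 + (r$j)\<^sup>2 + 2 * I$e * r$i * r$j))"

definition RDelta :: "('f::finite \<Rightarrow> 'e \<times> 'e \<times> 'e) \<Rightarrow> (real^'e::finite) set" where
  "RDelta fedges = {x. \<forall>f. let (a, b, c) = fedges f in
       0 < x$a \<and> x$a < x$b + x$c \<and>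
       0 < x$b \<and> x$b < x$c + x$a \<and>
       0 < x$c \<and> x$c < x$a + x$b}"

definition Qf :: "('e::finite \<Rightarrow> 'v::finite \<times> 'v) \<Rightarrow> ('f::finite \<Rightarrow> 'e \<times> 'e \<times> 'e)
                   \<Rightarrow> ((real^'e) \<times> (real^'v)) set" where
  "Qf ends fedges = {(I, r). (\<forall>e. I$e > 1) \<and> (\<forall>v. r$v > 0) \<and> Lf ends I r \<in> RDelta fedges}"

definition Lf_tilde :: "('e::finite \<Rightarrow> 'v::finite \<times> 'v) \<Rightarrow> (real^'e) \<times> (real^'v) \<Rightarrow> (real^'e) \<times> (real^'v)" where
  "Lf_tilde ends = (\<lambda>(I, r). (Lf ends I r, r))"

text \<open>Real analyticity of a map between Euclidean spaces: near every point of U it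
is the sum of an (unconditionally, hence absolutely) convergent power series in the
coordinates with respect to the standard basis.\<close>
definition real_analytic_on ::
  "'a::euclidean_space set \<Rightarrow> ('a \<Rightarrow> 'b::euclidean_space) \<Rightarrow> bool" where
  "real_analytic_on U f \<longleftrightarrow>
     (\<forall>x0\<in>U. \<exists>\<rho>>0. \<exists>c :: ('a \<Rightarrow> nat) \<Rightarrow> 'b.
        \<forall>x\<in>ball x0 \<rho>.
          ((\<lambda>\<alpha>. (\<Prod>b\<in>Basis. ((x - x0) \<bullet> b) ^ \<alpha> b) *\<^sub>R c \<alpha>) has_sum f x)
            {\<alpha>. \<forall>b. b \<notin> Basis \<longrightarrow> \<alpha> b = 0})"

end

theory Submission
  imports Defs "HOL-Library.Function_Algebras"
begin

text \<open>
  For positive radii the inversive distances are recovered from the lengths by solving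
  \<open>l\<^sup>2 = r\<^sub>i\<^sup>2 + r\<^sub>j\<^sup>2 + 2 I r\<^sub>i r\<^sub>j\<close> for \<open>I\<close>.  Hence \<open>(I, r) \<mapsto> (L\<^sub>f(I, r), r)\<close> has an explicit
  continuous inverse, and both maps are built from the coordinates by sums, products,
  square roots of positive functions and quotients by positive functions.

  Real analyticity is handled with power series in several variables whose coefficients
  are absolutely summable on a polydisc.  These are closed under sums, under products
  (Cauchy product of the coefficient families) and under substitution into a power series
  in one variable: after removing its constant term, a series becomes small on a smaller
  polydisc, and the double series obtained by expanding its powers can be rearranged.
\<close>

section \<open>Multi-indices and Cauchy products\<close>

definition multi_indices :: "('a::euclidean_space \<Rightarrow> nat) set" where
  "multi_indices = {\<alpha>. \<forall>b. b \<notin> Basis \<longrightarrow> \<alpha> b = 0}"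

definition mdegree :: "('a::euclidean_space \<Rightarrow> nat) \<Rightarrow> nat" where
  "mdegree \<alpha> = (\<Sum>b\<in>Basis. \<alpha> b)"

definition monomial :: "'a::euclidean_space \<Rightarrow> ('a \<Rightarrow> nat) \<Rightarrow> real" where
  "monomial h \<alpha> = (\<Prod>b\<in>Basis. (h \<bullet> b) ^ \<alpha> b)"

lemma zero_in_multi_indices [simp]: "0 \<in> multi_indices"
  by (simp add: multi_indices_def)

lemma add_in_multi_indices:
  "\<alpha> \<in> multi_indices \<Longrightarrow> \<beta> \<in> multi_indices \<Longrightarrow> \<alpha> + \<beta> \<in> multi_indices"
  by (simp add: multi_indices_def)

lemma mdegree_0 [simp]: "mdegree 0 = 0"
  by (simp add: mdegree_def)

lemma mdegree_add: "mdegree (\<alpha> + \<beta>) = mdegree \<alpha> + mdegree \<beta>"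
  by (simp add: mdegree_def sum.distrib)

lemma multi_index_nonzero:
  assumes "\<alpha> \<in> multi_indices" "\<alpha> \<noteq> 0"
  obtains b where "b \<in> Basis" "\<alpha> b \<noteq> 0"
proof -
  obtain b where "\<alpha> b \<noteq> 0"
    using assms(2) by (auto simp: fun_eq_iff)
  moreover from assms(1) this have "b \<in> Basis"
    by (auto simp: multi_indices_def)
  ultimately show thesis
    by (rule that[rotated])
qed

lemma mdegree_pos:
  assumes "\<alpha> \<in> multi_indices" "\<alpha> \<noteq> 0"
  shows "0 < mdegree \<alpha>"
proof -
  obtain b where "b \<in> Basis" "\<alpha> b \<noteq> 0"
    using multi_index_nonzero[OF assms] .
  then show ?thesis
    unfolding mdegree_def by (simp add: sum_pos2)
qed

lemma monomial_0 [simp]: "monomial h 0 = 1"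
  by (simp add: monomial_def)

lemma monomial_add: "monomial h (\<alpha> + \<beta>) = monomial h \<alpha> * monomial h \<beta>"
  by (simp add: monomial_def power_add prod.distrib)

lemma zero_monomial:
  assumes "\<alpha> \<in> multi_indices" "\<alpha> \<noteq> 0"
  shows "monomial 0 \<alpha> = 0"
proof -
  obtain b where "b \<in> Basis" "\<alpha> b \<noteq> 0"
    using multi_index_nonzero[OF assms] .
  then show ?thesis
    unfolding monomial_def by (intro prod_zero) auto
qed

lemma abs_monomial_le:
  assumes "\<forall>b\<in>Basis. \<bar>h \<bullet> b\<bar> \<le> \<rho>"
  shows "\<bar>monomial h \<alpha>\<bar> \<le> \<rho> ^ mdegree \<alpha>"
  unfolding monomial_def mdegree_def abs_prod power_abs power_sum
  using assms by (intro prod_mono) (auto intro: power_mono)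

lemma finite_multi_indices_below: "finite {\<alpha>\<in>multi_indices. \<forall>b. \<alpha> b \<le> \<gamma> b}"
proof (rule finite_subset)
  show "{\<alpha>\<in>multi_indices. \<forall>b. \<alpha> b \<le> \<gamma> b} \<subseteq>
        {\<alpha>. \<forall>b. (b \<in> Basis \<longrightarrow> \<alpha> b \<in> {..mdegree \<gamma>}) \<and> (b \<notin> Basis \<longrightarrow> \<alpha> b = 0)}"
    by (auto simp: multi_indices_def mdegree_def intro: order_trans[OF _ member_le_sum])
qed (rule finite_set_of_finite_funs; simp)

definition splits :: "('a::euclidean_space \<Rightarrow> nat) \<Rightarrow> (('a \<Rightarrow> nat) \<times> ('a \<Rightarrow> nat)) set" where
  "splits \<gamma> = {(\<alpha>, \<beta>). \<alpha> \<in> multi_indices \<and> \<beta> \<in> multi_indices \<and> \<alpha> + \<beta> = \<gamma>}"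

lemma finite_splits: "finite (splits \<gamma>)"
proof (rule finite_subset)
  let ?below = "{\<alpha>\<in>multi_indices. \<forall>b. \<alpha> b \<le> \<gamma> b}"
  show "splits \<gamma> \<subseteq> ?below \<times> ?below" by (auto simp: splits_def)
qed (intro finite_cartesian_product finite_multi_indices_below)

lemma has_sum_product_real:
  fixes a :: "'i \<Rightarrow> real" and b :: "'j \<Rightarrow> real"
  assumes a: "(a has_sum A) I" and b: "(b has_sum B) J"
  shows "((\<lambda>(i, j). a i * b j) has_sum A * B) (I \<times> J)"
proof -
  have abs_a: "(\<lambda>i. \<bar>a i\<bar>) summable_on I" and abs_b: "(\<lambda>j. \<bar>b j\<bar>) summable_on J"
    using a b summable_on_iff_abs_summable_on_real by (auto simp: summable_on_def)
  have "(\<lambda>(i, j). \<bar>a i * b j\<bar>) summable_on I \<times> J"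
  proof (rule summable_on_SigmaI[where g="\<lambda>i. \<bar>a i\<bar> * infsum (\<lambda>j. \<bar>b j\<bar>) J"])
    show "((\<lambda>j. (\<lambda>(i, j). \<bar>a i * b j\<bar>) (i, j)) has_sum \<bar>a i\<bar> * infsum (\<lambda>j. \<bar>b j\<bar>) J) J" for i
      using has_sum_cmult_right[OF has_sum_infsum[OF abs_b]] by (simp add: abs_mult)
  qed (use summable_on_cmult_left[OF abs_a] in auto)
  then have "(\<lambda>(i, j). a i * b j) summable_on I \<times> J"
    using summable_on_iff_abs_summable_on_real[of "\<lambda>(i, j). a i * b j" "I \<times> J"]
    by (simp add: case_prod_unfold)
  then have sum: "((\<lambda>(i, j). a i * b j) has_sum infsum (\<lambda>(i, j). a i * b j) (I \<times> J)) (I \<times> J)"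
    by simp
  have "((\<lambda>i. a i * B) has_sum infsum (\<lambda>(i, j). a i * b j) (I \<times> J)) I"
    by (rule has_sum_SigmaD[OF sum]) (simp add: has_sum_cmult_right[OF b])
  with has_sum_cmult_left[OF a] show ?thesis
    using sum has_sum_unique by metis
qed

definition mconv :: "(('a::euclidean_space \<Rightarrow> nat) \<Rightarrow> real) \<Rightarrow> (('a \<Rightarrow> nat) \<Rightarrow> real)
                       \<Rightarrow> ('a \<Rightarrow> nat) \<Rightarrow> real" where
  "mconv a b \<gamma> = (\<Sum>(\<alpha>, \<beta>)\<in>splits \<gamma>. a \<alpha> * b \<beta>)"

lemma has_sum_mconv:
  assumes "(a has_sum A) multi_indices" "(b has_sum B) multi_indices"
  shows "(mconv a b has_sum A * B) multi_indices"
proof -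
  let ?h = "\<lambda>(\<alpha>, \<beta>). (\<alpha> + \<beta>, (\<alpha>, \<beta>))"
  have inj: "inj_on ?h (multi_indices \<times> multi_indices)"
    by (auto simp: inj_on_def)
  have image: "?h ` (multi_indices \<times> multi_indices) = Sigma multi_indices splits"
    by (auto simp: splits_def image_iff intro: add_in_multi_indices)
  have "(((\<lambda>(\<gamma>, \<alpha>, \<beta>). a \<alpha> * b \<beta>) \<circ> ?h) has_sum A * B) (multi_indices \<times> multi_indices)"
    using has_sum_product_real[OF assms] by (simp add: case_prod_unfold comp_def)
  then have "((\<lambda>(\<gamma>, \<alpha>, \<beta>). a \<alpha> * b \<beta>) has_sum A * B) (Sigma multi_indices splits)"
    by (simp only: has_sum_reindex[OF inj, symmetric] image)
  then show ?thesis
    by (rule has_sum_SigmaD)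
       (auto simp: mconv_def case_prod_unfold intro: has_sum_finiteI finite_splits)
qed

lemma mconv_multiplicative:
  assumes "\<And>\<alpha> \<beta>. w (\<alpha> + \<beta>) = w \<alpha> * w \<beta>"
  shows "mconv (\<lambda>\<alpha>. a \<alpha> * w \<alpha>) (\<lambda>\<beta>. b \<beta> * w \<beta>) = (\<lambda>\<gamma>. mconv a b \<gamma> * w \<gamma>)"
  unfolding mconv_def sum_distrib_right
  by (intro ext sum.cong) (auto simp: splits_def assms[symmetric])

lemma abs_mconv_le: "\<bar>mconv a b \<gamma>\<bar> \<le> mconv (\<lambda>\<alpha>. \<bar>a \<alpha>\<bar>) (\<lambda>\<beta>. \<bar>b \<beta>\<bar>) \<gamma>"
  unfolding mconv_def case_prod_unfold
  by (rule order_trans[OF sum_abs]) (simp add: abs_mult)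

section \<open>Power series in several real variables\<close>

definition polydisc :: "'a::euclidean_space \<Rightarrow> real \<Rightarrow> 'a set" where
  "polydisc x0 \<rho> = {x. \<forall>b\<in>Basis. \<bar>(x - x0) \<bullet> b\<bar> < \<rho>}"

definition coeff_norm :: "(('a::euclidean_space \<Rightarrow> nat) \<Rightarrow> real) \<Rightarrow> real \<Rightarrow> real" where
  "coeff_norm c \<rho> = (\<Sum>\<^sub>\<infinity>\<alpha>\<in>multi_indices. \<bar>c \<alpha>\<bar> * \<rho> ^ mdegree \<alpha>)"

text \<open>The majorant condition, absolute convergence at the corner of the polydisc, is what
  licenses the Cauchy products and rearrangements below.\<close>

definition has_power_series ::
  "(('a::euclidean_space \<Rightarrow> nat) \<Rightarrow> real) \<Rightarrow> ('a \<Rightarrow> real) \<Rightarrow> 'a \<Rightarrow> real \<Rightarrow> bool" where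
  "has_power_series c g x0 \<rho> \<longleftrightarrow>
     (\<lambda>\<alpha>. \<bar>c \<alpha>\<bar> * \<rho> ^ mdegree \<alpha>) summable_on multi_indices \<and>
     (\<forall>x\<in>polydisc x0 \<rho>. ((\<lambda>\<alpha>. c \<alpha> * monomial (x - x0) \<alpha>) has_sum g x) multi_indices)"

definition real_analytic_at :: "'a::euclidean_space \<Rightarrow> ('a \<Rightarrow> real) \<Rightarrow> bool" where
  "real_analytic_at x0 g \<longleftrightarrow> (\<exists>\<rho>>0. \<exists>c. has_power_series c g x0 \<rho>)"

lemma has_power_series_has_sum:
  "has_power_series c g x0 \<rho> \<Longrightarrow> x \<in> polydisc x0 \<rho> \<Longrightarrow>
     ((\<lambda>\<alpha>. c \<alpha> * monomial (x - x0) \<alpha>) has_sum g x) multi_indices"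
  by (simp add: has_power_series_def)

lemma has_power_series_coeff_norm:
  "has_power_series c g x0 \<rho> \<Longrightarrow>
     ((\<lambda>\<alpha>. \<bar>c \<alpha>\<bar> * \<rho> ^ mdegree \<alpha>) has_sum coeff_norm c \<rho>) multi_indices"
  by (simp add: has_power_series_def coeff_norm_def)

lemma has_power_series_cong:
  "has_power_series c g x0 \<rho> \<Longrightarrow> (\<And>x. x \<in> polydisc x0 \<rho> \<Longrightarrow> g x = g' x) \<Longrightarrow>
     has_power_series c g' x0 \<rho>"
  by (simp add: has_power_series_def)

lemma coeff_norm_nonneg: "0 \<le> \<rho> \<Longrightarrow> 0 \<le> coeff_norm c \<rho>"
  by (simp add: coeff_norm_def infsum_nonneg)

lemma center_in_polydisc: "0 < \<rho> \<Longrightarrow> x0 \<in> polydisc x0 \<rho>"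
  by (simp add: polydisc_def)

lemma polydisc_mono: "\<sigma> \<le> \<rho> \<Longrightarrow> polydisc x0 \<sigma> \<subseteq> polydisc x0 \<rho>"
  by (auto simp: polydisc_def)

lemma has_power_series_mono:
  assumes "has_power_series c g x0 \<rho>" "0 \<le> \<sigma>" "\<sigma> \<le> \<rho>"
  shows "has_power_series c g x0 \<sigma>"
  unfolding has_power_series_def
proof (intro conjI ballI)
  show "(\<lambda>\<alpha>. \<bar>c \<alpha>\<bar> * \<sigma> ^ mdegree \<alpha>) summable_on multi_indices"
    by (rule summable_on_comparison_test[where f="\<lambda>\<alpha>. \<bar>c \<alpha>\<bar> * \<rho> ^ mdegree \<alpha>"])
       (use assms in \<open>auto simp: has_power_series_def intro: mult_left_mono power_mono\<close>)
qed (use assms polydisc_mono[OF assms(3), of x0] in \<open>auto simp: has_power_series_def\<close>)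

lemma has_power_series_center:
  assumes "has_power_series c g x0 \<rho>" "0 < \<rho>"
  shows "g x0 = c 0"
proof -
  have "((\<lambda>\<alpha>. c \<alpha> * monomial 0 \<alpha>) has_sum g x0) multi_indices"
    using has_power_series_has_sum[OF assms(1) center_in_polydisc[OF assms(2)]] by simp
  moreover have "((\<lambda>\<alpha>. c \<alpha> * monomial 0 \<alpha>) has_sum c 0) multi_indices"
    by (rule has_sum_finite_neutralI[where B="{0}"]) (auto simp: zero_monomial)
  ultimately show ?thesis by (rule has_sum_unique)
qed

lemma abs_monomial_le_polydisc:
  assumes "x \<in> polydisc x0 \<rho>"
  shows "\<bar>monomial (x - x0) \<alpha>\<bar> \<le> \<rho> ^ mdegree \<alpha>"
  using assms by (intro abs_monomial_le) (auto simp: polydisc_def less_imp_le)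

lemma abs_le_coeff_norm:
  assumes "has_power_series c g x0 \<rho>" "x \<in> polydisc x0 \<rho>"
  shows "\<bar>g x\<bar> \<le> coeff_norm c \<rho>"
proof -
  have term_le: "\<bar>c \<alpha> * monomial (x - x0) \<alpha>\<bar> \<le> \<bar>c \<alpha>\<bar> * \<rho> ^ mdegree \<alpha>" for \<alpha>
    using abs_monomial_le_polydisc[OF assms(2)] by (simp add: abs_mult mult_left_mono)
  note series = has_power_series_has_sum[OF assms]
    and norm = has_power_series_coeff_norm[OF assms(1)]
  have "g x \<le> coeff_norm c \<rho>"
    by (rule has_sum_mono[OF series norm]) (use term_le in \<open>auto simp: abs_le_iff\<close>)
  moreover have "- g x \<le> coeff_norm c \<rho>"
    by (rule has_sum_mono[OF has_sum_uminusI[OF series] norm])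
       (use term_le in \<open>auto simp: abs_le_iff\<close>)
  ultimately show ?thesis by linarith
qed

lemma has_power_series_single:
  assumes "\<beta> \<in> multi_indices"
  shows "has_power_series (\<lambda>\<alpha>. if \<alpha> = \<beta> then k else 0) (\<lambda>x. k * monomial (x - x0) \<beta>) x0 \<rho>"
    and "coeff_norm (\<lambda>\<alpha>. if \<alpha> = \<beta> then k else 0) \<rho> = \<bar>k\<bar> * \<rho> ^ mdegree \<beta>"
proof -
  have single: "(f has_sum f \<beta>) multi_indices" if "\<And>\<alpha>. \<alpha> \<noteq> \<beta> \<Longrightarrow> f \<alpha> = 0" for f :: "_ \<Rightarrow> real"
    by (rule has_sum_finite_neutralI[where B="{\<beta>}"]) (use assms that in auto)
  have norm: "((\<lambda>\<alpha>. \<bar>if \<alpha> = \<beta> then k else 0\<bar> * \<rho> ^ mdegree \<alpha>)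
                has_sum \<bar>k\<bar> * \<rho> ^ mdegree \<beta>) multi_indices"
    using single[of "\<lambda>\<alpha>. \<bar>if \<alpha> = \<beta> then k else 0\<bar> * \<rho> ^ mdegree \<alpha>"] by simp
  then show "coeff_norm (\<lambda>\<alpha>. if \<alpha> = \<beta> then k else 0) \<rho> = \<bar>k\<bar> * \<rho> ^ mdegree \<beta>"
    by (simp add: coeff_norm_def infsumI)
  show "has_power_series (\<lambda>\<alpha>. if \<alpha> = \<beta> then k else 0) (\<lambda>x. k * monomial (x - x0) \<beta>) x0 \<rho>"
    unfolding has_power_series_def
    using has_sum_imp_summable[OF norm]
      single[of "\<lambda>\<alpha>. (if \<alpha> = \<beta> then k else 0) * monomial (_ - x0) \<alpha>"]
    by simp
qed

lemma has_power_series_add: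
  assumes "has_power_series c1 g1 x0 \<rho>" "has_power_series c2 g2 x0 \<rho>" "0 \<le> \<rho>"
  shows "has_power_series (c1 + c2) (\<lambda>x. g1 x + g2 x) x0 \<rho>"
  unfolding has_power_series_def
proof (intro conjI ballI)
  show "(\<lambda>\<alpha>. \<bar>(c1 + c2) \<alpha>\<bar> * \<rho> ^ mdegree \<alpha>) summable_on multi_indices"
  proof (rule summable_on_comparison_test)
    show "(\<lambda>\<alpha>. \<bar>c1 \<alpha>\<bar> * \<rho> ^ mdegree \<alpha> + \<bar>c2 \<alpha>\<bar> * \<rho> ^ mdegree \<alpha>) summable_on multi_indices"
      using assms(1,2) by (intro summable_on_add) (auto simp: has_power_series_def)
  qed (use assms(3) in \<open>auto simp flip: distrib_right intro: mult_right_mono\<close>)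
next
  fix x assume "x \<in> polydisc x0 \<rho>"
  then show "((\<lambda>\<alpha>. (c1 + c2) \<alpha> * monomial (x - x0) \<alpha>) has_sum g1 x + g2 x) multi_indices"
    using has_sum_add[OF assms(1,2)[THEN has_power_series_has_sum]] by (simp add: distrib_right)
qed

lemma has_power_series_mult:
  assumes c1: "has_power_series c1 g1 x0 \<rho>" and c2: "has_power_series c2 g2 x0 \<rho>" and "0 \<le> \<rho>"
  shows "has_power_series (mconv c1 c2) (\<lambda>x. g1 x * g2 x) x0 \<rho>"
    and "coeff_norm (mconv c1 c2) \<rho> \<le> coeff_norm c1 \<rho> * coeff_norm c2 \<rho>"
proof -
  have weight_mult: "\<rho> ^ mdegree (\<alpha> + \<beta>) = \<rho> ^ mdegree \<alpha> * \<rho> ^ mdegree \<beta>" for \<alpha> \<beta> :: "'a \<Rightarrow> nat"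
    by (simp add: mdegree_add power_add)
  have majorant: "((\<lambda>\<gamma>. mconv (\<lambda>\<alpha>. \<bar>c1 \<alpha>\<bar>) (\<lambda>\<beta>. \<bar>c2 \<beta>\<bar>) \<gamma> * \<rho> ^ mdegree \<gamma>)
                    has_sum coeff_norm c1 \<rho> * coeff_norm c2 \<rho>) multi_indices"
    using has_sum_mconv[OF c1[THEN has_power_series_coeff_norm]
                           c2[THEN has_power_series_coeff_norm]]
    by (simp only: mconv_multiplicative[where w="\<lambda>\<alpha>. \<rho> ^ mdegree \<alpha>", OF weight_mult])
  have dominated: "\<bar>mconv c1 c2 \<gamma>\<bar> * \<rho> ^ mdegree \<gamma>
                     \<le> mconv (\<lambda>\<alpha>. \<bar>c1 \<alpha>\<bar>) (\<lambda>\<beta>. \<bar>c2 \<beta>\<bar>) \<gamma> * \<rho> ^ mdegree \<gamma>"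
    for \<gamma> using assms(3) abs_mconv_le by (intro mult_right_mono) auto
  have summable: "(\<lambda>\<gamma>. \<bar>mconv c1 c2 \<gamma>\<bar> * \<rho> ^ mdegree \<gamma>) summable_on multi_indices"
    by (rule summable_on_comparison_test[OF has_sum_imp_summable[OF majorant]])
       (use dominated assms(3) in auto)
  show "coeff_norm (mconv c1 c2) \<rho> \<le> coeff_norm c1 \<rho> * coeff_norm c2 \<rho>"
    using has_sum_mono[OF has_sum_infsum[OF summable] majorant] dominated
    by (simp add: coeff_norm_def)
  have "((\<lambda>\<gamma>. mconv c1 c2 \<gamma> * monomial (x - x0) \<gamma>) has_sum g1 x * g2 x) multi_indices"
    if "x \<in> polydisc x0 \<rho>" for x
    using has_sum_mconv[OF c1[THEN has_power_series_has_sum] c2[THEN has_power_series_has_sum],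
                        OF that that]
    by (simp only: mconv_multiplicative[where w="monomial (x - x0)", OF monomial_add])
  with summable show "has_power_series (mconv c1 c2) (\<lambda>x. g1 x * g2 x) x0 \<rho>"
    by (simp add: has_power_series_def)
qed

primrec mconv_power :: "(('a::euclidean_space \<Rightarrow> nat) \<Rightarrow> real) \<Rightarrow> nat \<Rightarrow> ('a \<Rightarrow> nat) \<Rightarrow> real" where
  "mconv_power c 0 = (\<lambda>\<alpha>. if \<alpha> = 0 then 1 else 0)"
| "mconv_power c (Suc n) = mconv c (mconv_power c n)"

lemma has_power_series_power:
  assumes "has_power_series c g x0 \<rho>" "0 \<le> \<rho>"
  shows "has_power_series (mconv_power c n) (\<lambda>x. g x ^ n) x0 \<rho> \<and>
         coeff_norm (mconv_power c n) \<rho> \<le> coeff_norm c \<rho> ^ n"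
proof (induction n)
  case 0
  have "has_power_series (\<lambda>\<alpha>. if \<alpha> = 0 then 1 else 0) (\<lambda>x. 1 * monomial (x - x0) 0) x0 \<rho>"
    by (rule has_power_series_single) simp
  then show ?case using has_power_series_single(2)[of "0::'a \<Rightarrow> nat" 1 \<rho>] by simp
next
  case (Suc n)
  note mult = has_power_series_mult[OF assms(1) Suc[THEN conjunct1] assms(2)]
  have "coeff_norm c \<rho> * coeff_norm (mconv_power c n) \<rho> \<le> coeff_norm c \<rho> * coeff_norm c \<rho> ^ n"
    using Suc coeff_norm_nonneg[OF assms(2)] by (intro mult_left_mono) auto
  with mult show ?case by simp
qed

lemma abs_summable_iterated_has_sum:
  fixes F :: "'i \<times> 'j \<Rightarrow> real"
  assumes F: "(\<lambda>p. \<bar>F p\<bar>) summable_on A \<times> B"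
    and rows: "\<And>i. i \<in> A \<Longrightarrow> ((\<lambda>j. F (i, j)) has_sum r i) B"
    and cols: "\<And>j. j \<in> B \<Longrightarrow> ((\<lambda>i. F (i, j)) has_sum c j) A"
  shows "\<exists>S. (r has_sum S) A \<and> (c has_sum S) B"
proof -
  have "F summable_on A \<times> B"
    using F summable_on_iff_abs_summable_on_real[of F] by simp
  then have total: "(F has_sum infsum F (A \<times> B)) (A \<times> B)" by simp
  have "(r has_sum infsum F (A \<times> B)) A"
    by (rule has_sum_SigmaD[OF total rows])
  moreover have "(c has_sum infsum F (A \<times> B)) B"
    by (rule has_sum_SigmaD[OF has_sum_swap[THEN iffD1, OF total]]) (simp add: cols)
  ultimately show ?thesis by blast
qed

lemma has_power_series_cmult:
  assumes "has_power_series c g x0 \<rho>"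
  shows "has_power_series (\<lambda>\<alpha>. k * c \<alpha>) (\<lambda>x. k * g x) x0 \<rho>"
    and "coeff_norm (\<lambda>\<alpha>. k * c \<alpha>) \<rho> = \<bar>k\<bar> * coeff_norm c \<rho>"
proof -
  have "((\<lambda>\<alpha>. \<bar>k * c \<alpha>\<bar> * \<rho> ^ mdegree \<alpha>) has_sum \<bar>k\<bar> * coeff_norm c \<rho>) multi_indices"
    using has_sum_cmult_right[OF has_power_series_coeff_norm[OF assms]]
    by (simp add: abs_mult mult.assoc)
  moreover have "((\<lambda>\<alpha>. k * c \<alpha> * monomial (x - x0) \<alpha>) has_sum k * g x) multi_indices"
    if "x \<in> polydisc x0 \<rho>" for x
    using has_sum_cmult_right[OF has_power_series_has_sum[OF assms that]] by (simp add: mult.assoc)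
  ultimately show "has_power_series (\<lambda>\<alpha>. k * c \<alpha>) (\<lambda>x. k * g x) x0 \<rho>"
    and "coeff_norm (\<lambda>\<alpha>. k * c \<alpha>) \<rho> = \<bar>k\<bar> * coeff_norm c \<rho>"
    by (auto simp: has_power_series_def coeff_norm_def infsumI dest: has_sum_imp_summable)
qed

lemma has_power_series_infsum:
  assumes series: "\<And>n. n \<in> N \<Longrightarrow> has_power_series (c n) (g n) x0 \<sigma>" and "0 < \<sigma>"
    and summable: "(\<lambda>n. coeff_norm (c n) \<sigma>) summable_on N"
  shows "has_power_series (\<lambda>\<alpha>. \<Sum>\<^sub>\<infinity>n\<in>N. c n \<alpha>) (\<lambda>x. \<Sum>\<^sub>\<infinity>n\<in>N. g n x) x0 \<sigma>"
proof -
  define B where "B = (\<lambda>(n, \<alpha>). \<bar>c n \<alpha>\<bar> * \<sigma> ^ mdegree \<alpha>)"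
  have B: "B summable_on N \<times> multi_indices"
  proof (rule summable_on_SigmaI[where g="\<lambda>n. coeff_norm (c n) \<sigma>"])
    show "((\<lambda>\<alpha>. B (n, \<alpha>)) has_sum coeff_norm (c n) \<sigma>) multi_indices" if "n \<in> N" for n
      using has_power_series_coeff_norm[OF series[OF that]] by (simp add: B_def)
  qed (use summable \<open>0 < \<sigma>\<close> in \<open>auto simp: B_def\<close>)
  then have B_swap: "(\<lambda>(\<alpha>, n). B (n, \<alpha>)) summable_on multi_indices \<times> N"
    by (subst (asm) summable_on_swap) (simp add: case_prod_unfold)
  have B_col: "(\<lambda>n. B (n, \<alpha>)) summable_on N" if "\<alpha> \<in> multi_indices" for \<alpha>
    using summable_on_SigmaD1[of "\<lambda>\<alpha> n. B (n, \<alpha>)", OF _ that] B_swap by (simp add: case_prod_unfold)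
  have abs_coeff_summable: "(\<lambda>n. \<bar>c n \<alpha>\<bar>) summable_on N" if "\<alpha> \<in> multi_indices" for \<alpha>
    using B_col[OF that] summable_on_cmult_left'[of "\<sigma> ^ mdegree \<alpha>" "\<lambda>n. \<bar>c n \<alpha>\<bar>" N] \<open>0 < \<sigma>\<close>
    by (simp add: B_def)
  then have coeff_summable: "(\<lambda>n. c n \<alpha>) summable_on N" if "\<alpha> \<in> multi_indices" for \<alpha>
    using that summable_on_iff_abs_summable_on_real by auto
  show ?thesis
    unfolding has_power_series_def
  proof (intro conjI ballI)
    have "\<bar>\<Sum>\<^sub>\<infinity>n\<in>N. c n \<alpha>\<bar> * \<sigma> ^ mdegree \<alpha> \<le> (\<Sum>\<^sub>\<infinity>n\<in>N. B (n, \<alpha>))"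
      if "\<alpha> \<in> multi_indices" for \<alpha>
    proof -
      have "\<bar>\<Sum>\<^sub>\<infinity>n\<in>N. c n \<alpha>\<bar> \<le> (\<Sum>\<^sub>\<infinity>n\<in>N. \<bar>c n \<alpha>\<bar>)"
        using norm_infsum_bound[of "\<lambda>n. c n \<alpha>" N] abs_coeff_summable[OF that] by simp
      then show ?thesis
        using \<open>0 < \<sigma>\<close> by (simp add: B_def infsum_cmult_left' mult_right_mono)
    qed
    then show "(\<lambda>\<alpha>. \<bar>\<Sum>\<^sub>\<infinity>n\<in>N. c n \<alpha>\<bar> * \<sigma> ^ mdegree \<alpha>) summable_on multi_indices"
      by (intro summable_on_comparison_test[OF summable_on_SigmaD[OF B_swap]])
         (use \<open>0 < \<sigma>\<close> in \<open>auto simp: B_col\<close>)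
  next
    fix x assume x: "x \<in> polydisc x0 \<sigma>"
    define F where "F = (\<lambda>(n, \<alpha>). c n \<alpha> * monomial (x - x0) \<alpha>)"
    have abs_F: "(\<lambda>p. \<bar>F p\<bar>) summable_on N \<times> multi_indices"
      by (rule summable_on_comparison_test[OF B])
         (use abs_monomial_le_polydisc[OF x] in
           \<open>auto simp: F_def B_def abs_mult intro!: mult_left_mono\<close>)
    have rows: "((\<lambda>\<alpha>. F (n, \<alpha>)) has_sum g n x) multi_indices" if "n \<in> N" for n
      using has_power_series_has_sum[OF series[OF that] x] by (simp add: F_def)
    have cols: "((\<lambda>n. F (n, \<alpha>)) has_sum (\<Sum>\<^sub>\<infinity>n\<in>N. c n \<alpha>) * monomial (x - x0) \<alpha>) N"
      if "\<alpha> \<in> multi_indices" for \<alpha>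
      using has_sum_cmult_left[OF has_sum_infsum[OF coeff_summable[OF that]]] by (simp add: F_def)
    obtain S where "((\<lambda>n. g n x) has_sum S) N"
      and "((\<lambda>\<alpha>. (\<Sum>\<^sub>\<infinity>n\<in>N. c n \<alpha>) * monomial (x - x0) \<alpha>) has_sum S) multi_indices"
      using abs_summable_iterated_has_sum[OF abs_F rows cols] by blast
    then show "((\<lambda>\<alpha>. (\<Sum>\<^sub>\<infinity>n\<in>N. c n \<alpha>) * monomial (x - x0) \<alpha>) has_sum (\<Sum>\<^sub>\<infinity>n\<in>N. g n x)) multi_indices"
      by (simp add: infsumI)
  qed
qed

lemma coeff_norm_scale_le:
  assumes d: "has_power_series d h x0 \<rho>" and "d 0 = 0" "0 \<le> \<rho>" "0 \<le> q" "q \<le> 1"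
  shows "coeff_norm d (q * \<rho>) \<le> q * coeff_norm d \<rho>"
proof -
  have "\<bar>d \<alpha>\<bar> * (q * \<rho>) ^ mdegree \<alpha> \<le> q * (\<bar>d \<alpha>\<bar> * \<rho> ^ mdegree \<alpha>)" if "\<alpha> \<in> multi_indices" for \<alpha>
  proof (cases "\<alpha> = 0")
    case False
    then have "q ^ mdegree \<alpha> \<le> q"
      using power_decreasing[of 1 "mdegree \<alpha>" q] mdegree_pos[OF that] assms(4,5) by simp
    then have "q ^ mdegree \<alpha> * (\<bar>d \<alpha>\<bar> * \<rho> ^ mdegree \<alpha>) \<le> q * (\<bar>d \<alpha>\<bar> * \<rho> ^ mdegree \<alpha>)"
      by (rule mult_right_mono) (use assms(3) in simp)
    then show ?thesis
      by (simp add: power_mult_distrib mult_ac)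
  qed (simp add: assms(2))
  moreover have "has_power_series d h x0 (q * \<rho>)"
    using assms by (intro has_power_series_mono[OF d]) (auto simp: mult_left_le_one_le)
  ultimately show ?thesis
    unfolding coeff_norm_def
    using d by (subst infsum_cmult_right'[symmetric])
      (intro infsum_mono summable_on_cmult_right; simp add: has_power_series_def)
qed

lemma abs_powser_summable_on:
  fixes p :: "nat \<Rightarrow> real"
  assumes "\<And>t. \<bar>t\<bar> < R \<Longrightarrow> (\<lambda>n. p n * t ^ n) sums \<psi> t" "0 \<le> m" "m < R"
  shows "(\<lambda>n. \<bar>p n\<bar> * m ^ n) summable_on UNIV"
proof -
  have "summable (\<lambda>n. p n * ((m + R) / 2) ^ n)"
    using assms by (intro sums_summable[OF assms(1)]) auto
  from powser_insidea[OF this, of m] have "summable (\<lambda>n. \<bar>p n\<bar> * m ^ n)"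
    using assms(2,3) by (simp add: abs_mult power_abs)
  then show ?thesis
    by (rule summable_nonneg_imp_summable_on) (use assms(2) in simp)
qed

lemma has_power_series_compose_powser:
  assumes h: "has_power_series d h x0 \<sigma>" and "0 < \<sigma>" and small: "coeff_norm d \<sigma> < R"
    and \<psi>: "\<And>t. \<bar>t\<bar> < R \<Longrightarrow> (\<lambda>n. p n * t ^ n) sums \<psi> t"
  shows "has_power_series (\<lambda>\<alpha>. \<Sum>\<^sub>\<infinity>n. p n * mconv_power d n \<alpha>) (\<lambda>x. \<psi> (h x)) x0 \<sigma>"
proof -
  define m where "m = coeff_norm d \<sigma>"
  have m: "0 \<le> m" "m < R"
    using coeff_norm_nonneg[of \<sigma> d] \<open>0 < \<sigma>\<close> small by (auto simp: m_def)
  note powers = has_power_series_power[OF h less_imp_le[OF \<open>0 < \<sigma>\<close>]]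
  have majorant: "(\<lambda>n. \<bar>p n\<bar> * m ^ n) summable_on UNIV"
    using \<psi> m by (rule abs_powser_summable_on)
  have "has_power_series (\<lambda>\<alpha>. \<Sum>\<^sub>\<infinity>n. p n * mconv_power d n \<alpha>) (\<lambda>x. \<Sum>\<^sub>\<infinity>n. p n * h x ^ n) x0 \<sigma>"
  proof (rule has_power_series_infsum)
    show "has_power_series (\<lambda>\<alpha>. p n * mconv_power d n \<alpha>) (\<lambda>x. p n * h x ^ n) x0 \<sigma>" for n
      using has_power_series_cmult(1) powers by blast
    have "coeff_norm (\<lambda>\<alpha>. p n * mconv_power d n \<alpha>) \<sigma> = \<bar>p n\<bar> * coeff_norm (mconv_power d n) \<sigma>" for n
      using has_power_series_cmult(2) powers by blast
    then show "(\<lambda>n. coeff_norm (\<lambda>\<alpha>. p n * mconv_power d n \<alpha>) \<sigma>) summable_on UNIV"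
      by (intro summable_on_comparison_test[OF majorant])
         (use powers coeff_norm_nonneg[OF less_imp_le[OF \<open>0 < \<sigma>\<close>]] in
           \<open>auto simp: m_def intro!: mult_left_mono mult_nonneg_nonneg\<close>)
  qed (fact \<open>0 < \<sigma>\<close>)
  moreover have "(\<Sum>\<^sub>\<infinity>n. p n * h x ^ n) = \<psi> (h x)" if "x \<in> polydisc x0 \<sigma>" for x
  proof -
    have hx: "\<bar>h x\<bar> \<le> m"
      using abs_le_coeff_norm[OF h that] by (simp add: m_def)
    have "(\<lambda>n. \<bar>p n * h x ^ n\<bar>) summable_on UNIV"
      by (rule summable_on_comparison_test[OF majorant])
         (use hx in \<open>auto simp: abs_mult power_abs intro!: mult_left_mono power_mono\<close>)
    then have "(\<lambda>n. p n * h x ^ n) sums (\<Sum>\<^sub>\<infinity>n. p n * h x ^ n)"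
      using summable_on_iff_abs_summable_on_real[of "\<lambda>n. p n * h x ^ n" UNIV]
      by (auto intro: has_sum_imp_sums)
    then show ?thesis
      using \<psi>[of "h x"] hx m sums_unique2 by force
  qed
  ultimately show ?thesis
    by (rule has_power_series_cong)
qed

section \<open>Real analytic functions\<close>

lemma real_analytic_at_compose_powser:
  assumes "real_analytic_at x0 g" "0 < R"
    and \<phi>: "\<And>t. \<bar>t\<bar> < R \<Longrightarrow> (\<lambda>n. p n * t ^ n) sums \<phi> (g x0 + t)"
  shows "real_analytic_at x0 (\<lambda>x. \<phi> (g x))"
proof -
  obtain \<rho> c where "0 < \<rho>" and c: "has_power_series c g x0 \<rho>"
    using assms(1) by (auto simp: real_analytic_at_def)
  txt \<open>Without its constant term the coefficient norm shrinks at least linearly with the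
    radius, so on a small polydisc \<open>g - g x0\<close> stays inside the disc of convergence of the
    outer series.\<close>
  define d where "d = c(0 := 0)"
  have "has_power_series (c + (\<lambda>\<alpha>. if \<alpha> = 0 then - c 0 else 0))
          (\<lambda>x. g x + - c 0 * monomial (x - x0) 0) x0 \<rho>"
    using \<open>0 < \<rho>\<close> by (intro has_power_series_add c has_power_series_single) auto
  moreover have "c + (\<lambda>\<alpha>. if \<alpha> = 0 then - c 0 else 0) = d"
    by (auto simp: d_def)
  ultimately have d: "has_power_series d (\<lambda>x. g x - g x0) x0 \<rho>"
    using has_power_series_center[OF c \<open>0 < \<rho>\<close>] by simp
  define M where "M = coeff_norm d \<rho>"
  define q where "q = R / (R + M)"
  have "0 \<le> M"
    using coeff_norm_nonneg[of \<rho> d] \<open>0 < \<rho>\<close> by (simp add: M_def)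
  then have q: "0 < q" "q \<le> 1" "q * M < R"
    using \<open>0 < R\<close> by (auto simp: q_def field_simps)
  have "coeff_norm d (q * \<rho>) < R"
    using coeff_norm_scale_le[OF d _ _ _ q(2)] q \<open>0 < \<rho>\<close> by (simp add: d_def M_def)
  then have "has_power_series (\<lambda>\<alpha>. \<Sum>\<^sub>\<infinity>n. p n * mconv_power d n \<alpha>)
               (\<lambda>x. \<phi> (g x0 + (g x - g x0))) x0 (q * \<rho>)"
    using \<open>0 < \<rho>\<close> q
    by (intro has_power_series_compose_powser[OF has_power_series_mono[OF d]] \<phi>) auto
  then show ?thesis
    using \<open>0 < \<rho>\<close> q unfolding real_analytic_at_def by (auto intro!: exI[of _ "q * \<rho>"])
qed

lemma real_analytic_at_common_radius:
  assumes "finite G" "\<And>g. g \<in> G \<Longrightarrow> real_analytic_at x0 g"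
  shows "\<exists>\<rho>>0. \<exists>c. \<forall>g\<in>G. has_power_series (c g) g x0 \<rho>"
  using assms
proof (induction G rule: finite_induct)
  case empty
  show ?case by (auto intro: exI[of _ 1])
next
  case (insert g G)
  then obtain \<rho> c where "0 < \<rho>" "\<forall>g'\<in>G. has_power_series (c g') g' x0 \<rho>"
    by auto
  moreover have "real_analytic_at x0 g"
    using insert.prems by blast
  then obtain \<rho>' c' where "0 < \<rho>'" "has_power_series c' g x0 \<rho>'"
    by (auto simp: real_analytic_at_def)
  ultimately have "\<forall>g'\<in>insert g G. has_power_series ((c(g := c')) g') g' x0 (min \<rho> \<rho>')"
    by (auto intro: has_power_series_mono)
  then show ?case
    using \<open>0 < \<rho>\<close> \<open>0 < \<rho>'\<close> by (intro exI[of _ "min \<rho> \<rho>'"] conjI exI[of _ "c(g := c')"]) auto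
qed

lemma real_analytic_at_const: "real_analytic_at x0 (\<lambda>_. k)"
proof -
  have "has_power_series (\<lambda>\<alpha>. if \<alpha> = 0 then k else 0) (\<lambda>x. k * monomial (x - x0) 0) x0 1"
    by (rule has_power_series_single) simp
  then show ?thesis
    unfolding real_analytic_at_def monomial_0 mult_1_right using zero_less_one by blast
qed

lemma real_analytic_at_inner_Basis:
  assumes "b \<in> Basis"
  shows "real_analytic_at x0 (\<lambda>x. x \<bullet> b)"
proof -
  define \<delta> where "\<delta> = (\<lambda>b'. if b' = b then 1 else 0 :: nat)"
  have "\<delta> \<in> multi_indices"
    using assms by (simp add: multi_indices_def \<delta>_def)
  have monomial_\<delta>: "monomial h \<delta> = h \<bullet> b" for h
  proof -
    have "monomial h \<delta> = (\<Prod>b'\<in>Basis. if b' = b then h \<bullet> b else 1)"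
      unfolding monomial_def \<delta>_def by (intro prod.cong) auto
    then show ?thesis
      using assms by (simp add: prod.delta)
  qed
  have "has_power_series (\<lambda>\<alpha>. if \<alpha> = 0 then x0 \<bullet> b else 0) (\<lambda>x. x0 \<bullet> b * monomial (x - x0) 0) x0 1"
    by (rule has_power_series_single) simp
  moreover have "has_power_series (\<lambda>\<alpha>. if \<alpha> = \<delta> then 1 else 0) (\<lambda>x. 1 * monomial (x - x0) \<delta>) x0 1"
    by (rule has_power_series_single) fact
  ultimately have "has_power_series
                     ((\<lambda>\<alpha>. if \<alpha> = 0 then x0 \<bullet> b else 0) + (\<lambda>\<alpha>. if \<alpha> = \<delta> then 1 else 0))
                     (\<lambda>x. x \<bullet> b) x0 1"
    using has_power_series_add by (fastforce simp: monomial_\<delta> inner_diff_left)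
  then show ?thesis
    unfolding real_analytic_at_def using zero_less_one by blast
qed

lemma real_analytic_at_add:
  assumes "real_analytic_at x0 g1" "real_analytic_at x0 g2"
  shows "real_analytic_at x0 (\<lambda>x. g1 x + g2 x)"
proof -
  obtain \<rho> c where "0 < \<rho>" "has_power_series (c g1) g1 x0 \<rho>" "has_power_series (c g2) g2 x0 \<rho>"
    using real_analytic_at_common_radius[of "{g1, g2}" x0] assms by auto
  then show ?thesis
    unfolding real_analytic_at_def by (blast intro: has_power_series_add less_imp_le)
qed

lemma real_analytic_at_mult:
  assumes "real_analytic_at x0 g1" "real_analytic_at x0 g2"
  shows "real_analytic_at x0 (\<lambda>x. g1 x * g2 x)"
proof -
  obtain \<rho> c where "0 < \<rho>" "has_power_series (c g1) g1 x0 \<rho>" "has_power_series (c g2) g2 x0 \<rho>"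
    using real_analytic_at_common_radius[of "{g1, g2}" x0] assms by auto
  then show ?thesis
    unfolding real_analytic_at_def by (blast intro: has_power_series_mult(1) less_imp_le)
qed

lemma real_analytic_at_diff:
  assumes "real_analytic_at x0 g1" "real_analytic_at x0 g2"
  shows "real_analytic_at x0 (\<lambda>x. g1 x - g2 x)"
  using real_analytic_at_add[OF assms(1) real_analytic_at_mult[OF real_analytic_at_const assms(2)],
      of "-1"]
  by simp

lemma real_analytic_at_sqrt:
  assumes "real_analytic_at x0 g" "0 < g x0"
  shows "real_analytic_at x0 (\<lambda>x. sqrt (g x))"
  by (rule real_analytic_at_compose_powser[OF assms sqrt_series'])

lemma real_analytic_at_inverse:
  assumes "real_analytic_at x0 g" "0 < g x0"
  shows "real_analytic_at x0 (\<lambda>x. inverse (g x))"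
proof (rule real_analytic_at_compose_powser[OF assms])
  fix t :: real
  assume "\<bar>t\<bar> < g x0"
  then have "(\<lambda>n. inverse (g x0) * (- t / g x0) ^ n) sums (inverse (g x0) * (1 / (1 - - t / g x0)))"
    using \<open>0 < g x0\<close> by (intro sums_mult geometric_sums) (simp add: abs_div)
  moreover have "inverse (g x0) * (1 / (1 - - t / g x0)) = inverse (g x0 + t)"
    using \<open>\<bar>t\<bar> < g x0\<close> by (simp add: field_simps)
  moreover have "- t / g x0 = - inverse (g x0) * t"
    by (simp add: divide_inverse)
  then have "(\<lambda>n. inverse (g x0) * (- t / g x0) ^ n)
               = (\<lambda>n. (inverse (g x0) * (- inverse (g x0)) ^ n) * t ^ n)"
    by (simp only: power_mult_distrib mult.assoc)
  ultimately show "(\<lambda>n. (inverse (g x0) * (- inverse (g x0)) ^ n) * t ^ n) sums inverse (g x0 + t)"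
    by metis
qed

lemma real_analytic_at_divide:
  assumes "real_analytic_at x0 g1" "real_analytic_at x0 g2" "0 < g2 x0"
  shows "real_analytic_at x0 (\<lambda>x. g1 x / g2 x)"
  using real_analytic_at_mult[OF assms(1) real_analytic_at_inverse[OF assms(2,3)]]
  by (simp add: divide_inverse)

lemma has_sum_finite_sum:
  fixes f :: "'i \<Rightarrow> 'a \<Rightarrow> 'b::topological_comm_monoid_add"
  assumes "\<And>i. i \<in> I \<Longrightarrow> (f i has_sum s i) A"
  shows "((\<lambda>x. \<Sum>i\<in>I. f i x) has_sum (\<Sum>i\<in>I. s i)) A"
proof -
  have "sum (\<lambda>x. \<Sum>i\<in>I. f i x) = (\<lambda>F. \<Sum>i\<in>I. sum (f i) F)"
    by (rule ext) (rule sum.swap)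
  then show ?thesis
    using assms tendsto_sum[of I "\<lambda>i. sum (f i)" s] by (simp add: has_sum_def)
qed

lemma ball_subset_polydisc: "ball x0 \<rho> \<subseteq> polydisc x0 \<rho>"
  by (auto simp: polydisc_def dist_norm norm_minus_commute intro: le_less_trans[OF Basis_le_norm])

lemma real_analytic_onI:
  fixes f :: "'a::euclidean_space \<Rightarrow> 'b::euclidean_space"
  assumes "\<And>x0 b. x0 \<in> U \<Longrightarrow> b \<in> Basis \<Longrightarrow> real_analytic_at x0 (\<lambda>x. f x \<bullet> b)"
  shows "real_analytic_on U f"
  unfolding real_analytic_on_def
proof
  fix x0 assume "x0 \<in> U"
  then have "\<exists>\<rho>>0. \<exists>c. \<forall>g\<in>(\<lambda>b x. f x \<bullet> b) ` Basis. has_power_series (c g) g x0 \<rho>"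
    using assms by (intro real_analytic_at_common_radius) auto
  then obtain \<rho> c where "0 < \<rho>"
    and c: "\<And>b. b \<in> Basis \<Longrightarrow> has_power_series (c (\<lambda>x. f x \<bullet> b)) (\<lambda>x. f x \<bullet> b) x0 \<rho>"
    by auto
  define C where "C \<alpha> = (\<Sum>b\<in>Basis. c (\<lambda>x. f x \<bullet> b) \<alpha> *\<^sub>R b)" for \<alpha>
  have "((\<lambda>\<alpha>. monomial (x - x0) \<alpha> *\<^sub>R C \<alpha>) has_sum f x) multi_indices" if "x \<in> ball x0 \<rho>" for x
  proof -
    have "((\<lambda>\<alpha>. \<Sum>b\<in>Basis. (c (\<lambda>x. f x \<bullet> b) \<alpha> * monomial (x - x0) \<alpha>) *\<^sub>R b)
            has_sum (\<Sum>b\<in>Basis. (f x \<bullet> b) *\<^sub>R b)) multi_indices"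
      using has_power_series_has_sum[OF c subsetD[OF ball_subset_polydisc that]]
      by (intro has_sum_finite_sum has_sum_bounded_linear[OF bounded_linear_scaleR_left])
    then show ?thesis
      by (simp add: C_def euclidean_representation scaleR_sum_right mult.commute)
  qed
  then show "\<exists>\<rho>>0. \<exists>c. \<forall>x\<in>ball x0 \<rho>.
               ((\<lambda>\<alpha>. (\<Prod>b\<in>Basis. ((x - x0) \<bullet> b) ^ \<alpha> b) *\<^sub>R c \<alpha>) has_sum f x)
                 {\<alpha>. \<forall>b. b \<notin> Basis \<longrightarrow> \<alpha> b = 0}"
    using \<open>0 < \<rho>\<close> unfolding monomial_def multi_indices_def by blast
qed

lemma real_analytic_on_subset: "real_analytic_on U f \<Longrightarrow> V \<subseteq> U \<Longrightarrow> real_analytic_on V f"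
  by (auto simp: real_analytic_on_def)

lemma real_analytic_on_pair_vecI:
  fixes f :: "'a::euclidean_space \<Rightarrow> (real^'m) \<times> (real^'n)"
  assumes "\<And>x0 i. x0 \<in> U \<Longrightarrow> real_analytic_at x0 (\<lambda>x. fst (f x) $ i)"
    and "\<And>x0 j. x0 \<in> U \<Longrightarrow> real_analytic_at x0 (\<lambda>x. snd (f x) $ j)"
  shows "real_analytic_on U f"
  by (rule real_analytic_onI)
     (use assms in \<open>auto simp: Basis_prod_def Basis_vec_def inner_prod_def inner_axis\<close>)

lemma real_analytic_at_fst_vec_nth: "real_analytic_at z0 (\<lambda>z :: (real^'m) \<times> (real^'n). fst z $ i)"
proof -
  have "(axis i 1, 0) \<in> (Basis :: ((real^'m) \<times> (real^'n)) set)"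
    unfolding Basis_prod_def by (rule UnI1) (rule imageI, simp)
  from real_analytic_at_inner_Basis[OF this, of z0] show ?thesis
    by (simp add: inner_prod_def inner_axis)
qed

lemma real_analytic_at_snd_vec_nth: "real_analytic_at z0 (\<lambda>z :: (real^'m) \<times> (real^'n). snd z $ j)"
proof -
  have "(0, axis j 1) \<in> (Basis :: ((real^'m) \<times> (real^'n)) set)"
    unfolding Basis_prod_def by (rule UnI2) (rule imageI, simp)
  from real_analytic_at_inner_Basis[OF this, of z0] show ?thesis
    by (simp add: inner_prod_def inner_axis)
qed

lemma real_analytic_at_power:
  assumes "real_analytic_at x0 g"
  shows "real_analytic_at x0 (\<lambda>x. g x ^ n)"
  using assms has_power_series_power less_imp_le unfolding real_analytic_at_def by blast

section \<open>The length map\<close>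

lemma Lf_nth:
  "Lf ends I r $ e = sqrt ((r $ fst (ends e))\<^sup>2 + (r $ snd (ends e))\<^sup>2
                           + 2 * I $ e * r $ fst (ends e) * r $ snd (ends e))"
  by (simp add: Lf_def case_prod_unfold Let_def)

lemma length_radicand_pos:
  fixes a b t :: real
  assumes "0 < a" "0 < b" "-1 < t"
  shows "0 < a\<^sup>2 + b\<^sup>2 + 2 * t * a * b"
proof -
  have "a\<^sup>2 + b\<^sup>2 + 2 * t * a * b = (a - b)\<^sup>2 + 2 * (1 + t) * a * b"
    by (simp add: power2_eq_square algebra_simps)
  moreover have "0 < 2 * (1 + t) * a * b"
    using assms by simp
  ultimately show ?thesis
    by (metis add_nonneg_pos zero_le_power2)
qed

definition Lf_tilde_inv ::
  "('e::finite \<Rightarrow> 'v::finite \<times> 'v) \<Rightarrow> (real^'e) \<times> (real^'v) \<Rightarrow> (real^'e) \<times> (real^'v)" where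
  "Lf_tilde_inv ends = (\<lambda>(l, r). ((\<chi> e. let (i, j) = ends e in
       ((l $ e)\<^sup>2 - (r $ i)\<^sup>2 - (r $ j)\<^sup>2) / (2 * r $ i * r $ j)), r))"

lemma Lf_tilde_inv_Lf_tilde:
  assumes "\<forall>e. -1 < I $ e" "\<forall>v. 0 < r $ v"
  shows "Lf_tilde_inv ends (Lf_tilde ends (I, r)) = (I, r)"
proof -
  have "((Lf ends I r $ e)\<^sup>2 - (r $ fst (ends e))\<^sup>2 - (r $ snd (ends e))\<^sup>2)
          / (2 * r $ fst (ends e) * r $ snd (ends e)) = I $ e" for e
    using length_radicand_pos[of "r $ fst (ends e)" "r $ snd (ends e)" "I $ e"] assms
    by (simp add: Lf_nth less_imp_neq[symmetric])
  then show ?thesis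
    by (simp add: Lf_tilde_def Lf_tilde_inv_def vec_eq_iff case_prod_unfold Let_def)
qed

lemma continuous_on_Lf_tilde: "continuous_on S (Lf_tilde ends)"
  unfolding Lf_tilde_def Lf_def case_prod_unfold Let_def by (intro continuous_intros)

lemma continuous_on_Lf_tilde_inv:
  "continuous_on (UNIV \<times> {r. \<forall>v. 0 < r $ v}) (Lf_tilde_inv ends)"
  unfolding Lf_tilde_inv_def case_prod_unfold Let_def
  by (intro continuous_intros) (auto simp: less_imp_neq[symmetric])

lemma real_analytic_on_Lf_tilde:
  fixes ends :: "'e::finite \<Rightarrow> 'v::finite \<times> 'v"
  shows "real_analytic_on ({I. \<forall>e. -1 < I $ e} \<times> {r. \<forall>v. 0 < r $ v}) (Lf_tilde ends)"
proof (rule real_analytic_on_pair_vecI)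
  fix z0 :: "(real^'e) \<times> (real^'v)" and e
  assume "z0 \<in> {I. \<forall>e. -1 < I $ e} \<times> {r. \<forall>v. 0 < r $ v}"
  then have "0 < (snd z0 $ fst (ends e))\<^sup>2 + (snd z0 $ snd (ends e))\<^sup>2
                 + 2 * fst z0 $ e * snd z0 $ fst (ends e) * snd z0 $ snd (ends e)"
    by (intro length_radicand_pos) auto
  then show "real_analytic_at z0 (\<lambda>z. fst (Lf_tilde ends z) $ e)"
    unfolding Lf_tilde_def case_prod_unfold fst_conv Lf_nth
    by (intro real_analytic_at_sqrt real_analytic_at_add real_analytic_at_mult
        real_analytic_at_power real_analytic_at_const
        real_analytic_at_fst_vec_nth real_analytic_at_snd_vec_nth)
qed (simp add: Lf_tilde_def case_prod_unfold real_analytic_at_snd_vec_nth)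

lemma real_analytic_on_Lf_tilde_inv:
  fixes ends :: "'e::finite \<Rightarrow> 'v::finite \<times> 'v"
  shows "real_analytic_on (UNIV \<times> {r. \<forall>v. 0 < r $ v}) (Lf_tilde_inv ends)"
proof (rule real_analytic_on_pair_vecI)
  fix z0 :: "(real^'e) \<times> (real^'v)" and e
  assume "z0 \<in> UNIV \<times> {r. \<forall>v. 0 < r $ v}"
  then have "0 < 2 * snd z0 $ fst (ends e) * snd z0 $ snd (ends e)"
    by auto
  then show "real_analytic_at z0 (\<lambda>z. fst (Lf_tilde_inv ends z) $ e)"
    unfolding Lf_tilde_inv_def case_prod_unfold Let_def fst_conv vec_lambda_beta
    by (intro real_analytic_at_divide real_analytic_at_diff real_analytic_at_mult
        real_analytic_at_power real_analytic_at_const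
        real_analytic_at_fst_vec_nth real_analytic_at_snd_vec_nth)
qed (simp add: Lf_tilde_inv_def case_prod_unfold real_analytic_at_snd_vec_nth)

theorem proposition2p15:
  fixes ends :: "'e::finite \<Rightarrow> 'v::finite \<times> 'v"
    and fedges :: "'f::finite \<Rightarrow> 'e \<times> 'e \<times> 'e"
  assumes "triangulation_data ends fedges"
  shows "Lf_tilde ends ` Qf ends fedges \<subseteq> RDelta fedges \<times> {r. \<forall>v. r$v > 0}
       \<and> inj_on (Lf_tilde ends) (Qf ends fedges)
       \<and> (\<exists>G. homeomorphism (Qf ends fedges) (Lf_tilde ends ` Qf ends fedges) (Lf_tilde ends) G
              \<and> real_analytic_on (Qf ends fedges) (Lf_tilde ends)
              \<and> real_analytic_on (Lf_tilde ends ` Qf ends fedges) G)"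
proof -
  let ?Q = "Qf ends fedges" and ?L = "Lf_tilde ends" and ?G = "Lf_tilde_inv ends"
  have domain: "?Q \<subseteq> {I. \<forall>e. -1 < I $ e} \<times> {r. \<forall>v. 0 < r $ v}"
    by (auto simp: Qf_def intro: less_trans[of "-1" 1, simplified])
  have image: "?L ` ?Q \<subseteq> RDelta fedges \<times> {r. \<forall>v. r $ v > 0}"
    by (auto simp: Qf_def Lf_tilde_def)
  have inverse: "?G (?L z) = z" if "z \<in> ?Q" for z
    using subsetD[OF domain that] by (cases z) (simp add: Lf_tilde_inv_Lf_tilde)
  have "homeomorphism ?Q (?L ` ?Q) ?L ?G"
  proof (rule homeomorphismI)
    show "continuous_on (?L ` ?Q) ?G"
      by (rule continuous_on_subset[OF continuous_on_Lf_tilde_inv]) (use image in auto)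
  qed (use inverse continuous_on_Lf_tilde in auto)
  moreover have "real_analytic_on ?Q ?L"
    by (rule real_analytic_on_subset[OF real_analytic_on_Lf_tilde domain])
  moreover have "real_analytic_on (?L ` ?Q) ?G"
    by (rule real_analytic_on_subset[OF real_analytic_on_Lf_tilde_inv]) (use image in auto)
  ultimately show ?thesis
    using image inj_on_inverseI[of ?Q ?G ?L] inverse by blast
qed

end
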